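(* Let $G$ be a grid-labelled graph of type $(a,b)$ with $m\ge 1$ edges, none of which is diagonal. Let $\rho_0=|1\rangle\langle 1|\otimes|1\rangle\langle 1|$ on $\mathbb{C}^a\otimes\mathbb{C}^b$. Then there exist local unitaries $U_1,\dots,U_m$ (each of the form $U_x=V_x\otimes W_x$ with $V_x$ unitary on $\mathbb{C}^a$ and $W_x$ unitary on $\mathbb{C}^b$), one for each edge, such that $$\rho(G)=\frac{1}{m}\sum_{x=1}^m U_x\rho_0U_x^\dagger .$$ In particular $\rho(G)$ can be obtained from $\rho_0$ by a protocol using only local unitaries and $\log m$ bits of classical communication (one party samples $x\in[m]$ uniformly and sends it to the other).
   Context: A grid-labelled graph of type $(a,b)$ is a simple graph $G$ whose vertex set is the grid $[a]\times[b]$. Its combinatorial Laplacian is $L(G)=D(G)-A(G)$ (degree matrix minus adjacency matrix), indexed by vertices. If $G$ has $m\ge1$ edges, $\rho(G)=L(G)/(2m)$, viewed as a density matrix on $\mathbb{C}^a\otimes\mathbb{C}^b$ with vertex $(i,j)$ corresponding to the standard basis vector $|i\rangle\otimes|j\rangle$; equivalently $\rho(G)=\frac1m\sum_{\{(i,j),(k,l)\}\in E(G)}|\psi\rangle\langle\psi|$ with $|\psi\rangle=\frac{1}{\sqrt2}(|i\rangle|j\rangle-|k\rangle|l\rangle)$. An edge $\{(i,j),(k,l)\}$ is horizontal if $i=k$, vertical if $j=l$, and diagonal if $i\neq k$ and $j\neq l$. *)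

theory Defs
  imports Complex_Main "Jordan_Normal_Form.Matrix"
begin

text \<open>Conventions: the grid [a] x [b] is represented 0-indexed as
  {0..<a} x {0..<b}; vertex (i,j) corresponds to basis vector |i> (x) |j>,
  i.e. to index i*b + j of C^(a*b). The paper's |1> is basis index 0.\<close>

definition grid :: "nat \<Rightarrow> nat \<Rightarrow> (nat \<times> nat) set" where
  "grid a b = {0..<a} \<times> {0..<b}"

definition grid_graph :: "nat \<Rightarrow> nat \<Rightarrow> (nat \<times> nat) set set \<Rightarrow> bool" where
  "grid_graph a b E \<longleftrightarrow> (\<forall>e\<in>E. \<exists>u v. u \<in> grid a b \<and> v \<in> grid a b \<and> u \<noteq> v \<and> e = {u, v})"

definition diagonal_edge :: "(nat \<times> nat) set \<Rightarrow> bool" where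
  "diagonal_edge e \<longleftrightarrow> (\<exists>i j k l. e = {(i,j),(k,l)} \<and> i \<noteq> k \<and> j \<noteq> l)"

definition vtx :: "nat \<Rightarrow> nat \<Rightarrow> nat \<times> nat" where
  "vtx b p = (p div b, p mod b)"

definition laplacian :: "nat \<Rightarrow> nat \<Rightarrow> (nat \<times> nat) set set \<Rightarrow> complex mat" where
  "laplacian a b E = mat (a*b) (a*b) (\<lambda>(p,q).
     if p = q then of_nat (card {e\<in>E. vtx b p \<in> e})
     else if {vtx b p, vtx b q} \<in> E then -1 else 0)"

definition rho :: "nat \<Rightarrow> nat \<Rightarrow> (nat \<times> nat) set set \<Rightarrow> complex mat" where
  "rho a b E = (1 / (2 * of_nat (card E))) \<cdot>\<^sub>m laplacian a b E"

definition kron :: "complex mat \<Rightarrow> complex mat \<Rightarrow> complex mat" where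
  "kron A B = mat (dim_row A * dim_row B) (dim_col A * dim_col B)
     (\<lambda>(i,j). A $$ (i div dim_row B, j div dim_col B) * B $$ (i mod dim_row B, j mod dim_col B))"

definition dagger :: "complex mat \<Rightarrow> complex mat" where
  "dagger A = mat (dim_col A) (dim_row A) (\<lambda>(i,j). cnj (A $$ (j,i)))"

definition unitary_mat :: "nat \<Rightarrow> complex mat \<Rightarrow> bool" where
  "unitary_mat n U \<longleftrightarrow> U \<in> carrier_mat n n \<and> dagger U * U = 1\<^sub>m n \<and> U * dagger U = 1\<^sub>m n"

definition proj_basis :: "nat \<Rightarrow> nat \<Rightarrow> complex mat" where
  "proj_basis n k = mat n n (\<lambda>(i,j). if i = k \<and> j = k then 1 else 0)"

definition rho0 :: "nat \<Rightarrow> nat \<Rightarrow> complex mat" where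
  "rho0 a b = kron (proj_basis a 0) (proj_basis b 0)"

definition mat_sum :: "nat \<Rightarrow> ('i \<Rightarrow> complex mat) \<Rightarrow> 'i set \<Rightarrow> complex mat" where
  "mat_sum n f I = mat n n (\<lambda>(i,j). \<Sum>x\<in>I. f x $$ (i,j))"

end

theory Submission
  imports Defs "HOL-Combinatorics.Transposition" "Jordan_Normal_Form.Determinant"
begin

text \<open>Every edge \<open>e = {u, v}\<close> contributes the rank-one projector onto
  \<open>\<psi>\<^sub>e = (|u\<rangle> - |v\<rangle>)/\<surd>2\<close> to \<open>L(G)/2\<close>, so \<open>\<rho>(G)\<close> is the uniform average of these
  projectors. If \<open>e\<close> is horizontal, \<open>u = (i,j)\<close> and \<open>v = (i,l)\<close>, then
  \<open>\<psi>\<^sub>e = |i\<rangle> \<otimes> (|j\<rangle> - |l\<rangle>)/\<surd>2\<close> is a product vector; it is the image of \<open>|0\<rangle> \<otimes> |0\<rangle>\<close>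
  under \<open>V \<otimes> W\<close>, where \<open>V\<close> is a permutation matrix and \<open>W\<close> a row-permuted Hadamard
  matrix. Vertical edges are symmetric. Conjugating \<open>\<rho>\<^sub>0\<close> by \<open>V \<otimes> W\<close> then yields
  the projector onto \<open>\<psi>\<^sub>e\<close>.\<close>

lemma index_mult_mat_sum:
  assumes "dim_col A = n" "dim_row B = n" "i < dim_row A" "j < dim_col B"
  shows "(A * B) $$ (i,j) = (\<Sum>k<n. A $$ (i,k) * B $$ (k,j))"
  using assms by (simp add: scalar_prod_def atLeast0LessThan)

lemma dim_dagger [simp]:
  "dim_row (dagger A) = dim_col A" "dim_col (dagger A) = dim_row A"
  by (simp_all add: dagger_def)

lemma index_dagger [simp]:
  "i < dim_col A \<Longrightarrow> j < dim_row A \<Longrightarrow> dagger A $$ (i,j) = cnj (A $$ (j,i))"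
  by (simp add: dagger_def)

lemma unitary_mat_carrier: "unitary_mat n U \<Longrightarrow> U \<in> carrier_mat n n"
  by (simp add: unitary_mat_def)

lemma unitary_matI:
  assumes U: "U \<in> carrier_mat n n" and left_inverse: "dagger U * U = 1\<^sub>m n"
  shows "unitary_mat n U"
proof -
  have "dagger U \<in> carrier_mat n n" using U by auto
  then have "U * dagger U = 1\<^sub>m n"
    using mat_mult_left_right_inverse U left_inverse by blast
  with U left_inverse show ?thesis unfolding unitary_mat_def by blast
qed

lemma unitary_mat_one: "unitary_mat n (1\<^sub>m n)"
  by (rule unitary_matI) (auto intro!: eq_matI simp: index_mult_mat_sum[where n=n] sum.delta)

lemma unitary_mat_permute_rows:
  assumes U: "unitary_mat n U" and \<tau>: "bij_betw \<tau> {..<n} {..<n}"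
  shows "unitary_mat n (mat n n (\<lambda>(r,s). U $$ (\<tau> r, s)))"
proof (rule unitary_matI)
  let ?M = "mat n n (\<lambda>(r,s). U $$ (\<tau> r, s))"
  show "dagger ?M * ?M = 1\<^sub>m n"
  proof (rule eq_matI)
    fix s t assume "s < dim_row (1\<^sub>m n)" "t < dim_col (1\<^sub>m n)"
    then have st: "s < n" "t < n" by auto
    have "(dagger ?M * ?M) $$ (s,t) = (\<Sum>r<n. cnj (U $$ (\<tau> r, s)) * U $$ (\<tau> r, t))"
      using st by (subst index_mult_mat_sum[where n=n]) auto
    also have "\<dots> = (\<Sum>k<n. cnj (U $$ (k, s)) * U $$ (k, t))"
      by (rule sum.reindex_bij_betw[OF \<tau>])
    also have "\<dots> = (dagger U * U) $$ (s,t)"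
      using st unitary_mat_carrier[OF U] by (subst index_mult_mat_sum[where n=n]) auto
    finally show "(dagger ?M * ?M) $$ (s,t) = 1\<^sub>m n $$ (s,t)"
      using U unfolding unitary_mat_def by simp
  qed auto
qed auto

definition inv_sqrt2 :: complex where
  "inv_sqrt2 = of_real (1 / sqrt 2)"

lemma inv_sqrt2_square: "inv_sqrt2 * inv_sqrt2 = 1/2"
proof -
  have "(1 / sqrt 2) * (1 / sqrt 2) = (1/2 :: real)"
    by (simp add: real_sqrt_mult[symmetric])
  then show ?thesis unfolding inv_sqrt2_def of_real_mult[symmetric] by simp
qed

lemma cnj_inv_sqrt2 [simp]: "cnj inv_sqrt2 = inv_sqrt2"
  by (simp add: inv_sqrt2_def)

definition hadamard_block :: "nat \<Rightarrow> complex mat" where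
  "hadamard_block n = mat n n (\<lambda>(r,s).
     if r < 2 \<and> s < 2 then (if r = 0 \<and> s = 0 then inv_sqrt2 else - inv_sqrt2) else of_bool (r = s))"

lemma hadamard_block_involution:
  assumes "2 \<le> n"
  shows "hadamard_block n * hadamard_block n = 1\<^sub>m n"
proof (rule eq_matI)
  let ?H = "hadamard_block n"
  fix r t assume "r < dim_row (1\<^sub>m n)" "t < dim_col (1\<^sub>m n)"
  then have rt: "r < n" "t < n" by auto
  have tail: "(\<Sum>k\<in>{2..<n}. ?H $$ (r,k) * ?H $$ (k,t)) = of_bool (2 \<le> r \<and> r = t)"
  proof -
    have "(\<Sum>k\<in>{2..<n}. ?H $$ (r,k) * ?H $$ (k,t))
        = (\<Sum>k\<in>{2..<n}. if k = r then of_bool (r = t) else 0)"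
      using rt by (intro sum.cong) (auto simp: hadamard_block_def)
    then show ?thesis using rt by (simp add: sum.delta')
  qed
  have "(?H * ?H) $$ (r,t) = (\<Sum>k<n. ?H $$ (r,k) * ?H $$ (k,t))"
    using rt by (subst index_mult_mat_sum[where n=n]) (auto simp: hadamard_block_def)
  also have "{..<n} = {0, 1} \<union> {2..<n}" using assms by auto
  also have "(\<Sum>k\<in>{0, 1} \<union> {2..<n}. ?H $$ (r,k) * ?H $$ (k,t))
      = ?H $$ (r,0) * ?H $$ (0,t) + ?H $$ (r,1) * ?H $$ (1,t)
        + (\<Sum>k\<in>{2..<n}. ?H $$ (r,k) * ?H $$ (k,t))"
    by (subst sum.union_disjoint) auto
  also have "\<dots> = 1\<^sub>m n $$ (r,t)"
    using rt assms unfolding tail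
    by (auto simp: hadamard_block_def inv_sqrt2_square less_2_cases_iff)
  finally show "(?H * ?H) $$ (r,t) = 1\<^sub>m n $$ (r,t)" .
qed (auto simp: hadamard_block_def)

lemma unitary_mat_hadamard_block:
  assumes "2 \<le> n"
  shows "unitary_mat n (hadamard_block n)"
proof (rule unitary_matI)
  have "dagger (hadamard_block n) = hadamard_block n"
    by (rule eq_matI) (auto simp: hadamard_block_def)
  then show "dagger (hadamard_block n) * hadamard_block n = 1\<^sub>m n"
    using hadamard_block_involution[OF assms] by simp
qed (simp add: hadamard_block_def)

lemma unitary_mat_first_column_basis:
  assumes "i < n"
  shows "\<exists>V. unitary_mat n V \<and> (\<forall>r<n. V $$ (r,0) = of_bool (r = i))"
proof (intro exI conjI allI impI)
  let ?V = "mat n n (\<lambda>(r,s). 1\<^sub>m n $$ (transpose 0 i r, s))"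
  show "unitary_mat n ?V"
    using assms by (intro unitary_mat_permute_rows unitary_mat_one) auto
  fix r assume "r < n"
  then show "?V $$ (r,0) = of_bool (r = i)"
    using assms by (auto simp: transpose_def)
qed

definition basis_difference :: "nat \<Rightarrow> nat \<Rightarrow> nat \<Rightarrow> complex" where
  "basis_difference j l s = inv_sqrt2 * (of_bool (s = j) - of_bool (s = l))"

lemma unitary_mat_first_column_difference:
  assumes "j < n" "l < n" "j \<noteq> l"
  shows "\<exists>W. unitary_mat n W \<and> (\<forall>s<n. W $$ (s,0) = basis_difference j l s)"
proof (intro exI conjI allI impI)
  have n: "2 \<le> n" using assms by auto
  define \<tau> where "\<tau> = transpose 1 (transpose 0 j l) \<circ> transpose 0 j"
  have \<tau>_bij: "bij_betw \<tau> {..<n} {..<n}"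
    unfolding \<tau>_def using assms n
    by (intro bij_betw_trans[of _ _ "{..<n}"] bij_betw_transpose_iff) (auto simp: transpose_def)
  have \<tau>_inj: "inj \<tau>"
    unfolding \<tau>_def by (simp add: inj_compose bij_is_inj)
  have \<tau>_j: "\<tau> j = 0" and \<tau>_l: "\<tau> l = 1"
    using assms by (auto simp: \<tau>_def transpose_def)
  let ?W = "mat n n (\<lambda>(r,s). hadamard_block n $$ (\<tau> r, s))"
  show "unitary_mat n ?W"
    by (rule unitary_mat_permute_rows[OF unitary_mat_hadamard_block[OF n] \<tau>_bij])
  fix s assume s: "s < n"
  have "\<tau> s < n" using \<tau>_bij s by (auto simp: bij_betw_def)
  moreover have "\<tau> s = 0 \<longleftrightarrow> s = j" "\<tau> s = 1 \<longleftrightarrow> s = l"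
    using \<tau>_inj \<tau>_j \<tau>_l by (metis injD)+
  ultimately show "?W $$ (s,0) = basis_difference j l s"
    using s n assms by (auto simp: hadamard_block_def basis_difference_def)
qed

lemma kron_carrier_mat:
  "V \<in> carrier_mat a a \<Longrightarrow> W \<in> carrier_mat b b \<Longrightarrow> kron V W \<in> carrier_mat (a*b) (a*b)"
  by (simp add: kron_def)

lemma kron_first_column:
  assumes "V \<in> carrier_mat a a" "W \<in> carrier_mat b b"
    and "\<forall>r<a. V $$ (r,0) = f r" "\<forall>s<b. W $$ (s,0) = g s" and "p < a*b"
  shows "kron V W $$ (p,0) = f (p div b) * g (p mod b)"
proof -
  have "0 < b" "0 < a" using assms(5) by (auto intro: Nat.gr0I)
  moreover have "p div b < a" using assms(5) by (simp add: less_mult_imp_div_less)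
  ultimately show ?thesis using assms by (simp add: kron_def)
qed

definition edge_state :: "nat \<Rightarrow> nat \<times> nat \<Rightarrow> nat \<times> nat \<Rightarrow> nat \<Rightarrow> complex" where
  "edge_state b u v p = inv_sqrt2 * (of_bool (vtx b p = u) - of_bool (vtx b p = v))"

lemma local_unitary_prepares_edge_state:
  assumes "(i,j) \<in> grid a b" "(k,l) \<in> grid a b" "(i,j) \<noteq> (k,l)" "i = k \<or> j = l"
  shows "\<exists>V W. unitary_mat a V \<and> unitary_mat b W \<and>
           (\<forall>p<a*b. kron V W $$ (p,0) = edge_state b (i,j) (k,l) p)"
proof -
  have bounds: "i < a" "k < a" "j < b" "l < b" using assms by (auto simp: grid_def)
  show ?thesis
  proof (cases "i = k")
    case True
    with assms have "j \<noteq> l" by auto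
    then obtain V W where V: "unitary_mat a V" "\<forall>r<a. V $$ (r,0) = of_bool (r = i)"
      and W: "unitary_mat b W" "\<forall>s<b. W $$ (s,0) = basis_difference j l s"
      using unitary_mat_first_column_basis[OF bounds(1)]
        unitary_mat_first_column_difference[OF bounds(3,4)] by blast
    have "kron V W $$ (p,0) = edge_state b (i,j) (k,l) p" if "p < a*b" for p
      using kron_first_column[OF V(1)[THEN unitary_mat_carrier] W(1)[THEN unitary_mat_carrier]
          V(2) W(2) that] True
      by (auto simp: edge_state_def basis_difference_def vtx_def)
    with V W show ?thesis by blast
  next
    case False
    with assms have "j = l" by auto
    obtain V W where V: "unitary_mat a V" "\<forall>r<a. V $$ (r,0) = basis_difference i k r"
      and W: "unitary_mat b W" "\<forall>s<b. W $$ (s,0) = of_bool (s = j)"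
      using unitary_mat_first_column_difference[OF bounds(1,2) False]
        unitary_mat_first_column_basis[OF bounds(3)] by blast
    have "kron V W $$ (p,0) = edge_state b (i,j) (k,l) p" if "p < a*b" for p
      using kron_first_column[OF V(1)[THEN unitary_mat_carrier] W(1)[THEN unitary_mat_carrier]
          V(2) W(2) that] \<open>j = l\<close>
      by (auto simp: edge_state_def basis_difference_def vtx_def)
    with V W show ?thesis by blast
  qed
qed

lemma dim_rho0 [simp]: "dim_row (rho0 a b) = a*b" "dim_col (rho0 a b) = a*b"
  by (simp_all add: rho0_def kron_def proj_basis_def)

lemma index_rho0:
  assumes "p < a*b" "q < a*b"
  shows "rho0 a b $$ (p,q) = of_bool (p = 0 \<and> q = 0)"
proof -
  have b: "0 < b" using assms(1) by (auto intro: Nat.gr0I)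
  have zero_iff: "x div b = 0 \<and> x mod b = 0 \<longleftrightarrow> x = 0" for x :: nat
    using b by (metis div_mult_mod_eq mult_0_right add_0 div_0 mod_0)
  have "p div b < a" "q div b < a" using assms by (auto simp: less_mult_imp_div_less)
  then have "rho0 a b $$ (p,q)
      = of_bool (p div b = 0 \<and> q div b = 0) * of_bool (p mod b = 0 \<and> q mod b = 0)"
    using assms b by (simp add: rho0_def kron_def proj_basis_def)
  then show ?thesis using zero_iff[of p] zero_iff[of q] by auto
qed

lemma index_conj_rho0:
  assumes U: "U \<in> carrier_mat (a*b) (a*b)" and pq: "p < a*b" "q < a*b"
  shows "(U * rho0 a b * dagger U) $$ (p,q) = U $$ (p,0) * cnj (U $$ (q,0))"
proof -
  let ?n = "a*b"
  have n: "0 < ?n" using pq(1) by (rule le_less_trans[OF le0])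
  have first_col: "(U * rho0 a b) $$ (p,k) = of_bool (k = 0) * U $$ (p,0)" if k: "k < ?n" for k
  proof -
    have "(U * rho0 a b) $$ (p,k) = (\<Sum>m<?n. U $$ (p,m) * of_bool (m = 0 \<and> k = 0))"
      using U pq k by (subst index_mult_mat_sum[where n="?n"]) (auto simp: index_rho0)
    also have "\<dots> = (\<Sum>m<?n. if m = 0 then of_bool (k = 0) * U $$ (p,m) else 0)"
      by (intro sum.cong) auto
    finally show ?thesis using n by (simp add: sum.delta)
  qed
  have "(U * rho0 a b * dagger U) $$ (p,q) = (\<Sum>k<?n. (U * rho0 a b) $$ (p,k) * cnj (U $$ (q,k)))"
    using U pq by (subst index_mult_mat_sum[where n="?n"]) auto
  also have "\<dots> = (\<Sum>k<?n. if k = 0 then U $$ (p,0) * cnj (U $$ (q,0)) else 0)"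
    using first_col by (intro sum.cong) auto
  finally show ?thesis using n by (simp add: sum.delta)
qed

text \<open>The projector onto \<open>edge_state b u v\<close> for \<open>e = {u, v}\<close>; it is half the Laplacian of the
  single edge \<open>e\<close>.\<close>

definition edge_projector :: "nat \<Rightarrow> nat \<Rightarrow> (nat \<times> nat) set \<Rightarrow> complex mat" where
  "edge_projector a b e = mat (a*b) (a*b) (\<lambda>(p,q).
     if p = q then (if vtx b p \<in> e then 1/2 else 0)
     else if {vtx b p, vtx b q} = e then -1/2 else 0)"

lemma vtx_inj: "0 < b \<Longrightarrow> vtx b p = vtx b q \<Longrightarrow> p = q"
  unfolding vtx_def by (metis div_mult_mod_eq prod.inject)

lemma edge_state_outer_product:
  assumes "u \<noteq> v" "p < a*b" "q < a*b"
  shows "edge_state b u v p * cnj (edge_state b u v q) = edge_projector a b {u,v} $$ (p,q)"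
proof -
  have b: "0 < b" using assms(2) by (auto intro: Nat.gr0I)
  show ?thesis
  proof (cases "p = q")
    case True
    then show ?thesis using assms
      by (auto simp: edge_state_def edge_projector_def inv_sqrt2_square)
  next
    case False
    then have "vtx b p \<noteq> vtx b q" using vtx_inj b by blast
    then show ?thesis using False assms
      by (auto simp: edge_state_def edge_projector_def inv_sqrt2_square doubleton_eq_iff)
  qed
qed

lemma local_unitary_conj_rho0_eq_edge_projector:
  assumes "grid_graph a b E" "e \<in> E" "\<not> diagonal_edge e"
  shows "\<exists>V W. unitary_mat a V \<and> unitary_mat b W \<and>
           kron V W * rho0 a b * dagger (kron V W) = edge_projector a b e"
proof -
  obtain i j k l where ends: "(i,j) \<in> grid a b" "(k,l) \<in> grid a b" "(i,j) \<noteq> (k,l)"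
    and e: "e = {(i,j), (k,l)}"
    using assms(1,2) unfolding grid_graph_def by fast
  with assms(3) have "i = k \<or> j = l" unfolding diagonal_edge_def by blast
  then obtain V W where V: "unitary_mat a V" and W: "unitary_mat b W"
    and col: "\<forall>p<a*b. kron V W $$ (p,0) = edge_state b (i,j) (k,l) p"
    using local_unitary_prepares_edge_state[OF ends] by blast
  have U: "kron V W \<in> carrier_mat (a*b) (a*b)"
    using V W by (simp add: kron_carrier_mat unitary_mat_carrier)
  have "kron V W * rho0 a b * dagger (kron V W) = edge_projector a b e"
  proof (rule eq_matI)
    fix p q assume "p < dim_row (edge_projector a b e)" "q < dim_col (edge_projector a b e)"
    then have pq: "p < a*b" "q < a*b" by (auto simp: edge_projector_def)
    show "(kron V W * rho0 a b * dagger (kron V W)) $$ (p,q) = edge_projector a b e $$ (p,q)"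
      using index_conj_rho0[OF U pq] col pq edge_state_outer_product[OF ends(3) pq] e by simp
  qed (use U in \<open>auto simp: edge_projector_def\<close>)
  with V W show ?thesis by blast
qed

lemma dim_laplacian [simp]:
  "dim_row (laplacian a b E) = a*b" "dim_col (laplacian a b E) = a*b"
  by (simp_all add: laplacian_def)

lemma rho_eq_average_edge_projectors:
  assumes "finite E"
  shows "rho a b E = (1 / of_nat (card E)) \<cdot>\<^sub>m mat_sum (a*b) (edge_projector a b) E"
proof (rule eq_matI)
  fix p q assume "p < dim_row ((1 / of_nat (card E)) \<cdot>\<^sub>m mat_sum (a*b) (edge_projector a b) E)"
    "q < dim_col ((1 / of_nat (card E)) \<cdot>\<^sub>m mat_sum (a*b) (edge_projector a b) E)"
  then have pq: "p < a*b" "q < a*b" by (auto simp: mat_sum_def)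
  have "laplacian a b E $$ (p,q) = 2 * (\<Sum>e\<in>E. edge_projector a b e $$ (p,q))"
  proof (cases "p = q")
    case True
    have "(\<Sum>e\<in>E. edge_projector a b e $$ (p,q)) = (\<Sum>e\<in>E. if vtx b p \<in> e then 1/2 else 0)"
      using pq True by (simp add: edge_projector_def)
    also have "\<dots> = of_nat (card {e\<in>E. vtx b p \<in> e}) / 2"
      using sum.inter_filter[OF assms, of "\<lambda>_. 1/2 :: complex" "\<lambda>e. vtx b p \<in> e"] by simp
    finally show ?thesis using pq True by (simp add: laplacian_def mult.commute)
  next
    case False
    have "(\<Sum>e\<in>E. edge_projector a b e $$ (p,q))
        = (\<Sum>e\<in>E. if {vtx b p, vtx b q} = e then -1/2 else 0)"
      using pq False by (simp add: edge_projector_def)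
    then show ?thesis using assms pq False by (simp add: laplacian_def sum.delta)
  qed
  then show "rho a b E $$ (p,q)
      = ((1 / of_nat (card E)) \<cdot>\<^sub>m mat_sum (a*b) (edge_projector a b) E) $$ (p,q)"
    using pq by (simp add: rho_def mat_sum_def)
qed (simp_all add: rho_def mat_sum_def)

theorem mainTheorem2:
  fixes a b :: nat and E :: "(nat \<times> nat) set set"
  assumes "grid_graph a b E"
    and "card E \<ge> 1"
    and "\<forall>e\<in>E. \<not> diagonal_edge e"
  shows "\<exists>V W :: (nat \<times> nat) set \<Rightarrow> complex mat.
           (\<forall>e\<in>E. unitary_mat a (V e) \<and> unitary_mat b (W e)) \<and>
           rho a b E = (1 / of_nat (card E)) \<cdot>\<^sub>m
             mat_sum (a*b) (\<lambda>e. kron (V e) (W e) * rho0 a b * dagger (kron (V e) (W e))) E"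
proof -
  obtain V W where VW: "\<forall>e\<in>E. unitary_mat a (V e) \<and> unitary_mat b (W e) \<and>
      kron (V e) (W e) * rho0 a b * dagger (kron (V e) (W e)) = edge_projector a b e"
    using local_unitary_conj_rho0_eq_edge_projector[OF assms(1)] assms(3) by metis
  have "finite E" using assms(2) by (simp add: card_ge_0_finite)
  then have "rho a b E = (1 / of_nat (card E)) \<cdot>\<^sub>m
      mat_sum (a*b) (\<lambda>e. kron (V e) (W e) * rho0 a b * dagger (kron (V e) (W e))) E"
    using rho_eq_average_edge_projectors VW by (simp add: mat_sum_def)
  with VW show ?thesis by blast
qed

end
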